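(* Let $0<\lambda<1$ and $0<p<1$. Let \[ f(z)=\frac{z}{1-\frac{z}{p}+\lambda z\int_z^p\omega(t)\,dt}, \] where $\omega$ is analytic in $\mathbb{D}=\{z:|z|<1\}$ with $|\omega(z)|\le1$ on $\mathbb{D}$ (so $f\in\mathcal{U}_m(\lambda)$ has a simple pole at $z=p$), and let $f(z)=\sum_{k=-1}^\infty b_k(z-p)^k$ be its Laurent series at $z=p$. Then: (i) If $p\in\left(0,\frac{\sqrt{17}-1}{4}\right]$, then $|b_0|\le \frac{p}{(1-\lambda p^2)^2}$. (ii) If $p\in\left(\frac{\sqrt{17}-1}{4},1\right)$ and $\lambda\in\left[\frac{2p^2+p-2}{p^3},1\right)$, then $|b_0|\le \frac{p}{(1-\lambda p^2)^2}$. (iii) If $p\in\left(\frac{\sqrt{17}-1}{4},1\right)$ and $\lambda\in\left(0,\frac{2p^2+p-2}{p^3}\right)$, then \[ |b_0|\le \frac{p}{2(1-p^2)}\cdot\frac{\lambda p^3-2p^2+2}{1-\lambda p(\lambda p^3-2p^2+2)}. \] Equality in (i) and (ii) occurs for $\omega(z)\equiv-1$, while equality in (iii) is attained for $\omega(z)=-\frac{a+z}{1+az}$, where $a\in(-p,1)$ is chosen such that $\frac{a+p}{1+ap}=\frac{2-2p^2+\lambda p^3}{p}$.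
   Context: For $\lambda\in(0,1)$ and $p\in(0,1)$, $\mathcal{U}_m(\lambda)$ denotes the family of functions $f$ meromorphic in $\mathbb{D}$ with a pole at $z=p$, having a Taylor expansion $f(z)=z+\sum_{k=2}^\infty a_k z^k$ for $|z|<p$, and satisfying $\left|\frac{z}{f(z)}-z\left(\frac{z}{f(z)}\right)'-1\right|<\lambda$ for every $z\in\mathbb{D}$. The integral is along any path in $\mathbb{D}$ from $z$ to $p$. *)

theory Defs
  imports "HOL-Complex_Analysis.Complex_Analysis"
begin

text \<open>The function f(z) = z / (1 - z/p + lam z \<integral>_z^p \<omega>(t) dt); the integral is taken
  along the straight segment from z to p (path independent in the disc, which is convex).\<close>
definition Uf :: "real \<Rightarrow> real \<Rightarrow> (complex \<Rightarrow> complex) \<Rightarrow> complex \<Rightarrow> complex" where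
  "Uf lam p \<omega> z = z / (1 - z / of_real p
      + of_real lam * z * contour_integral (linepath z (of_real p)) \<omega>)"

definition b0 :: "real \<Rightarrow> real \<Rightarrow> (complex \<Rightarrow> complex) \<Rightarrow> complex" where
  "b0 lam p \<omega> = fls_nth (laurent_expansion (Uf lam p \<omega>) (of_real p)) 0"

end

(*
  The integral term has a primitive F of \<omega> on the disc, so f = z / G with
  G z = 1 - z/p + lam z (F p - F z), and G has a simple zero at p.  Reading off the
  Laurent coefficient gives b0 = p (-1 + lam p^3 \<omega>'(p)/2) / (1 + lam p^2 \<omega>(p))^2.
  With r = |\<omega>(p)|, the Schwarz-Pick lemma gives |\<omega>'(p)| \<le> (1 - r^2)/(1 - p^2), and the
  triangle inequality bounds |b0| by b0_majorant lam p r, that is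
    p/(2(1 - p^2)) (2 - 2p^2 + lam p^3 (1 - r^2)) / (1 - lam p^2 r)^2.
  On [0,1] this is largest at r = 1 when 2p^2 + p - 2 \<le> lam p^3, and otherwise at
  r = (lam p^3 - 2p^2 + 2)/p, where it equals the bound (iii).  Both values are attained,
  by functions with \<omega>(p) = -r and \<omega>'(p) = -(1 - r^2)/(1 - p^2): the constant -1 and the
  disc automorphism -(a + z)/(1 + a z) with (a + p)/(1 + a p) = r.
*)

theory Submission
  imports Defs
begin

lemma fls_nth_0_divide_fps_simple_zero:
  fixes P G :: "'a::field fps"
  assumes "G $ 0 = 0" and "G $ 1 \<noteq> 0"
  shows "fls_nth (fps_to_fls P / fps_to_fls G) 0 = (P $ 1 * G $ 1 - P $ 0 * G $ 2) / (G $ 1)^2"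
proof -
  define H where "H = fps_shift 1 G"
  have "G \<noteq> 0" "subdegree G \<noteq> 0"
    using assms by (auto simp: subdegree_eq_0_iff)
  then have G_eq: "G = H * fps_X"
    unfolding H_def using fps_shift_times_fps_X[of G] by simp
  have H: "H $ 0 = G $ 1" "H $ 1 = G $ 2"
    by (simp_all add: H_def numeral_2_eq_2)
  define R where "R = P / H"
  have "fps_to_fls P / fps_to_fls G = (fps_to_fls P / fps_to_fls H) / fls_X"
    unfolding G_eq fls_times_fps_to_fls fps_X_to_fls by (rule divide_divide_eq_left[symmetric])
  also have "fps_to_fls P / fps_to_fls H = fps_to_fls R"
    using H assms(2) unfolding R_def by (intro fls_divide_fps_to_fls) (simp add: subdegree_eq_0)
  finally have nth: "fls_nth (fps_to_fls P / fps_to_fls G) 0 = R $ 1"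
    by simp
  have "R * H = P"
    using H assms(2) by (simp add: R_def fps_divide_unit inverse_mult_eq_1 mult.assoc)
  then have R0: "R $ 0 * G $ 1 = P $ 0" and R1: "R $ 0 * G $ 2 + R $ 1 * G $ 1 = P $ 1"
    using fps_mult_nth_0[of R H] fps_mult_nth_1[of R H] H by simp_all
  have "P $ 1 * G $ 1 - P $ 0 * G $ 2 = R $ 1 * (G $ 1)^2"
    unfolding R0[symmetric] R1[symmetric] by (simp add: algebra_simps power2_eq_square)
  with nth assms(2) show ?thesis
    by simp
qed

lemma laurent_coeff_0_divide_simple_zero:
  assumes S: "open S" "z0 \<in> S"
    and G': "\<And>z. z \<in> S \<Longrightarrow> (G has_field_derivative G' z) (at z)"
    and G'': "(G' has_field_derivative G'') (at z0)"
    and zero: "G z0 = 0" "G' z0 \<noteq> 0"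
  shows "fls_nth (laurent_expansion (\<lambda>z. z / G z) z0) 0 = (G' z0 - z0 * G'' / 2) / (G' z0)^2"
proof -
  define Gs where "Gs = fps_expansion G z0"
  have "G holomorphic_on S"
    using G' S(1) by (auto simp: holomorphic_on_open)
  then have "G analytic_on {z0}"
    using S by (simp add: analytic_on_open[symmetric] analytic_on_subset)
  then have "(\<lambda>x. (z0 + x) / G (z0 + x)) has_laurent_expansion
               fps_to_fls (fps_const z0 + fps_X) / fps_to_fls Gs"
    unfolding Gs_def
    by (intro has_laurent_expansion_divide has_laurent_expansion_fps fps_expansion_intros
          analytic_at_imp_has_fps_expansion)
  then have "laurent_expansion (\<lambda>z. z / G z) z0 = fps_to_fls (fps_const z0 + fps_X) / fps_to_fls Gs"
    by (rule laurent_expansion_eqI)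
  moreover have "eventually (\<lambda>z. deriv G z = G' z) (nhds z0)"
    using eventually_nhds_in_open[OF S] by eventually_elim (use G' DERIV_imp_deriv in blast)
  then have "deriv (deriv G) z0 = G''"
    using deriv_cong_ev DERIV_imp_deriv[OF G''] by (metis refl)
  then have "Gs $ 0 = 0" "Gs $ 1 = G' z0" "Gs $ 2 = G'' / 2"
    using zero(1) DERIV_imp_deriv[OF G'[OF S(2)]]
    by (simp_all add: Gs_def fps_expansion_def numeral_2_eq_2)
  moreover note fls_nth_0_divide_fps_simple_zero[of Gs "fps_const z0 + fps_X"]
  ultimately show ?thesis
    using zero(2) by simp
qed

lemma Uf_eq_quotient:
  fixes lam p :: real and \<omega> :: "complex \<Rightarrow> complex"
  assumes hol: "\<omega> holomorphic_on ball 0 1" and p: "\<bar>p\<bar> < 1"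
  obtains F where "\<And>z. z \<in> ball 0 1 \<Longrightarrow> (F has_field_derivative \<omega> z) (at z)"
    and "\<And>z. z \<in> ball 0 1 \<Longrightarrow>
           Uf lam p \<omega> z = z / (1 - z / of_real p + of_real lam * z * (F (of_real p) - F z))"
proof -
  obtain F where F: "\<And>z. z \<in> ball 0 1 \<Longrightarrow> (F has_field_derivative \<omega> z) (at z)"
    using holomorphic_convex_primitive'[OF convex_ball open_ball hol]
    by (metis at_within_open open_ball)
  have "Uf lam p \<omega> z = z / (1 - z / of_real p + of_real lam * z * (F (of_real p) - F z))"
    if "z \<in> ball 0 1" for z
  proof -
    have "path_image (linepath z p) \<subseteq> ball 0 1"
      using that p by (simp add: closed_segment_subset)
    then have "(\<omega> has_contour_integral F p - F z) (linepath z p)"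
      using contour_integral_primitive[of "ball 0 1" F \<omega> "linepath z p"] F
      by (auto intro: has_field_derivative_at_within)
    then show ?thesis
      by (simp add: Uf_def contour_integral_unique)
  qed
  with F show thesis
    using that by blast
qed

lemma b0_eq:
  fixes lam p :: real
  assumes p: "0 < p" "p < 1" and hol: "\<omega> holomorphic_on ball 0 1"
    and nz: "1 + of_real (lam * p^2) * \<omega> p \<noteq> 0"
  shows "b0 lam p \<omega> = of_real p * (-1 + of_real (lam * p^3) * deriv \<omega> p / 2)
                          / (1 + of_real (lam * p^2) * \<omega> p)^2"
proof -
  define pc where "pc = (of_real p :: complex)"
  define lc where "lc = (of_real lam :: complex)"
  have pc0: "pc \<noteq> 0" and pin: "pc \<in> ball 0 1"
    using p by (simp_all add: pc_def)
  have nz': "1 + lc * pc^2 * \<omega> pc \<noteq> 0"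
    using nz by (simp add: pc_def lc_def)
  obtain F where F: "\<And>z. z \<in> ball 0 1 \<Longrightarrow> (F has_field_derivative \<omega> z) (at z)"
    and Uf_F: "\<And>z. z \<in> ball 0 1 \<Longrightarrow> Uf lam p \<omega> z = z / (1 - z / pc + lc * z * (F pc - F z))"
    using Uf_eq_quotient[OF hol, of p lam] p unfolding pc_def lc_def by auto
  define G where "G z = 1 - z / pc + lc * z * (F pc - F z)" for z
  have Uf_G: "Uf lam p \<omega> z = z / G z" if "z \<in> ball 0 1" for z
    using Uf_F[OF that] by (simp add: G_def)
  have "eventually (\<lambda>z. Uf lam p \<omega> z = z / G z) (at pc)"
    using eventually_at_in_open'[OF open_ball pin] by eventually_elim (rule Uf_G)
  then have b0_G: "b0 lam p \<omega> = fls_nth (laurent_expansion (\<lambda>z. z / G z) pc) 0"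
    unfolding b0_def pc_def by (simp cong: laurent_expansion_cong)
  define G' where "G' z = - 1 / pc + lc * (F pc - F z) - lc * z * \<omega> z" for z
  have "(G has_field_derivative G' z) (at z)" if "z \<in> ball 0 1" for z
    unfolding G_def G'_def using pc0
    by (auto intro!: derivative_eq_intros F that simp: field_simps)
  moreover have "(G' has_field_derivative - 2 * lc * \<omega> pc - lc * pc * deriv \<omega> pc) (at pc)"
    using holomorphic_derivI[OF hol open_ball pin]
    unfolding G'_def by (auto intro!: derivative_eq_intros F pin simp: algebra_simps)
  moreover have G'_pc: "G' pc = - (1 + lc * pc^2 * \<omega> pc) / pc"
    using pc0 by (simp add: G'_def field_simps power2_eq_square)
  moreover have "G pc = 0" "G' pc \<noteq> 0"
    using pc0 nz' by (simp_all add: G_def G'_pc add_eq_0_iff)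
  ultimately have "b0 lam p \<omega> = (G' pc - pc * (- 2 * lc * \<omega> pc - lc * pc * deriv \<omega> pc) / 2) / (G' pc)^2"
    unfolding b0_G using pin by (intro laurent_coeff_0_divide_simple_zero[of "ball 0 1"]) auto
  also have "\<dots> = ((-1 + lc * pc^3 * deriv \<omega> pc / 2) / pc) / ((1 + lc * pc^2 * \<omega> pc)^2 / pc^2)"
    using pc0 unfolding G'_pc by (simp add: field_simps power2_eq_square power3_eq_cube)
  also have "\<dots> = pc * (-1 + lc * pc^3 * deriv \<omega> pc / 2) / (1 + lc * pc^2 * \<omega> pc)^2"
    using pc0 by (simp add: divide_divide_eq_right power2_eq_square)
  finally show ?thesis by (simp add: pc_def lc_def)
qed

lemma Moebius_function_has_field_derivative:
  assumes "1 - cnj w * z \<noteq> 0"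
  shows "(Moebius_function 0 w has_field_derivative (1 - cnj w * w) / (1 - cnj w * z)^2) (at z)"
proof -
  have "((\<lambda>z. (z - w) / (1 - cnj w * z)) has_field_derivative
          ((1 - cnj w * z) + (z - w) * cnj w) / (1 - cnj w * z)^2) (at z)"
    using assms by (auto intro!: derivative_eq_intros simp: power2_eq_square)
  then show ?thesis
    by (simp add: Moebius_function_simple[abs_def] algebra_simps)
qed

lemma one_minus_cnj_mult_self: "1 - cnj z * z = of_real (1 - norm z ^ 2)"
  by (simp add: complex_norm_square mult.commute del: of_real_power)

lemma norm_one_minus_cnj_mult_self:
  assumes "norm z \<le> 1"
  shows "norm (1 - cnj z * z) = 1 - norm z ^ 2"
  using assms unfolding one_minus_cnj_mult_self norm_of_real by (simp add: power_le_one)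

lemma deriv_eq_0_if_norm_eq_1:
  assumes hol: "f holomorphic_on ball 0 1" and bnd: "\<forall>z\<in>ball 0 1. norm (f z) \<le> 1"
    and z: "z \<in> ball 0 1" "norm (f z) = 1" and z0: "norm z0 < 1"
  shows "deriv f z0 = 0"
proof -
  have "f constant_on ball 0 1"
  proof (rule Schwarz2[OF hol, of "1 - norm z" z])
    fix u assume "norm (z - u) < 1 - norm z"
    then have "u \<in> ball 0 1"
      using norm_triangle_ineq2[of u z] by (simp add: norm_minus_commute)
    then show "norm (f u) \<le> norm (f z)" using bnd z by simp
  qed (use z in \<open>auto simp: ball_subset_ball_iff\<close>)
  then obtain c where "\<And>u. u \<in> ball 0 1 \<Longrightarrow> f u = c"
    by (auto simp: constant_on_def)
  then have "eventually (\<lambda>u. f u = c) (nhds z0)"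
    using eventually_nhds_in_open[OF open_ball, of z0 0 1] z0 by (auto elim: eventually_mono)
  then show ?thesis
    by (simp add: deriv_cong_ev)
qed

lemma Schwarz_Pick_deriv_strict:
  assumes hol: "f holomorphic_on ball 0 1" and lt: "\<And>z. norm z < 1 \<Longrightarrow> norm (f z) < 1"
    and z0: "norm z0 < 1"
  shows "norm (deriv f z0) \<le> (1 - norm (f z0) ^ 2) / (1 - norm z0 ^ 2)"
proof -
  define w0 where "w0 = f z0"
  have w0: "norm w0 < 1" using lt z0 by (simp add: w0_def)
  define \<phi> where "\<phi> = Moebius_function 0 w0 \<circ> f \<circ> Moebius_function 0 (- z0)"
  have in_ball: "Moebius_function 0 (- z0) z \<in> ball 0 1" if "norm z < 1" for z
    using Moebius_function_norm_lt_1[of "- z0" z 0] z0 that by simp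
  have "Moebius_function 0 w0 \<circ> f holomorphic_on ball 0 1"
    using w0 lt by (intro holomorphic_on_compose_gen[OF hol Moebius_function_holomorphic]) auto
  then have hol_\<phi>: "\<phi> holomorphic_on ball 0 1"
    unfolding \<phi>_def using z0 in_ball
    by (intro holomorphic_on_compose_gen[OF Moebius_function_holomorphic]) auto
  have \<phi>0: "\<phi> 0 = 0"
    by (simp add: \<phi>_def Moebius_function_simple w0_def)
  have \<phi>_lt: "norm (\<phi> z) < 1" if "norm z < 1" for z
    unfolding \<phi>_def using Moebius_function_norm_lt_1 w0 lt in_ball that by simp
  have sq: "norm z0 ^ 2 < 1" "norm w0 ^ 2 < 1"
    using z0 w0 by (simp_all add: abs_square_less_1)
  then have w0_nz: "1 - cnj w0 * w0 \<noteq> 0"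
    unfolding one_minus_cnj_mult_self of_real_eq_0_iff by linarith
  have "(Moebius_function 0 w0 has_field_derivative 1 / (1 - cnj w0 * w0)) (at (f z0))"
    using Moebius_function_has_field_derivative[OF w0_nz] w0_nz
    by (simp add: w0_def[symmetric] power2_eq_square)
  moreover have "(f has_field_derivative deriv f z0) (at z0)"
    using holomorphic_derivI[OF hol open_ball] z0 by simp
  ultimately have "(Moebius_function 0 w0 \<circ> f has_field_derivative 1 / (1 - cnj w0 * w0) * deriv f z0)
                     (at (Moebius_function 0 (- z0) 0))"
    by (simp add: Moebius_function_simple DERIV_chain del: times_divide_eq_left)
  moreover have "(Moebius_function 0 (- z0) has_field_derivative 1 - cnj z0 * z0) (at 0)"
    using Moebius_function_has_field_derivative[of "- z0" 0] by simp
  ultimately have "(\<phi> has_field_derivative 1 / (1 - cnj w0 * w0) * deriv f z0 * (1 - cnj z0 * z0)) (at 0)"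
    unfolding \<phi>_def by (rule DERIV_chain)
  then have "deriv \<phi> 0 = 1 / (1 - cnj w0 * w0) * deriv f z0 * (1 - cnj z0 * z0)"
    by (rule DERIV_imp_deriv)
  then have "norm (deriv \<phi> 0) = 1 / (1 - norm w0 ^ 2) * norm (deriv f z0) * (1 - norm z0 ^ 2)"
    using z0 w0 by (simp only: norm_mult norm_divide norm_one norm_one_minus_cnj_mult_self less_imp_le)
  moreover have "norm (deriv \<phi> 0) \<le> 1"
    using Schwarz_Lemma(2)[OF hol_\<phi> \<phi>0 \<phi>_lt, of 0] by simp
  ultimately show ?thesis
    using sq by (simp add: w0_def pos_le_divide_eq)
qed

lemma Schwarz_Pick_deriv:
  assumes hol: "f holomorphic_on ball 0 1" and bnd: "\<forall>z\<in>ball 0 1. norm (f z) \<le> 1"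
    and z0: "norm z0 < 1"
  shows "norm (deriv f z0) \<le> (1 - norm (f z0) ^ 2) / (1 - norm z0 ^ 2)"
proof (cases "\<exists>z\<in>ball 0 1. norm (f z) = 1")
  case True
  then have "deriv f z0 = 0"
    using deriv_eq_0_if_norm_eq_1[OF hol bnd _ _ z0] by blast
  moreover have "norm (f z0) \<le> 1" "norm z0 ^ 2 < 1"
    using bnd z0 by (simp_all add: abs_square_less_1)
  ultimately show ?thesis
    by (simp add: power_le_one)
next
  case False
  then show ?thesis
    using bnd z0 by (intro Schwarz_Pick_deriv_strict[OF hol]) force+
qed

definition b0_majorant :: "real \<Rightarrow> real \<Rightarrow> real \<Rightarrow> real" where
  "b0_majorant lam p r =
     p / (2 * (1 - p^2)) * ((2 - 2 * p^2 + lam * p^3 * (1 - r^2)) / (1 - lam * p^2 * r)^2)"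

lemma b0_majorant_1:
  assumes "p^2 \<noteq> 1"
  shows "b0_majorant lam p 1 = p / (1 - lam * p^2)^2"
  using assms by (simp add: b0_majorant_def divide_simps)

lemma b0_majorant_nonneg:
  assumes "0 \<le> lam" "0 < p" "p < 1" "r\<^sup>2 \<le> 1"
  shows "0 \<le> b0_majorant lam p r"
  unfolding b0_majorant_def using assms
  by (intro mult_nonneg_nonneg divide_nonneg_nonneg add_nonneg_nonneg)
     (auto simp: abs_square_le_1 less_imp_le)

lemma norm_b0_le_majorant:
  fixes lam p :: real
  assumes lam: "0 \<le> lam" "lam * p^2 < 1" and p: "0 < p" "p < 1"
    and hol: "\<omega> holomorphic_on ball 0 1" and bnd: "\<forall>z\<in>ball 0 1. norm (\<omega> z) \<le> 1"
  shows "norm (b0 lam p \<omega>) \<le> b0_majorant lam p (norm (\<omega> p))"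
proof -
  define r where "r = norm (\<omega> p)"
  define \<delta> where "\<delta> = norm (deriv \<omega> p)"
  have p2: "0 < 1 - p^2"
    using p by (simp add: abs_square_less_1)
  have r: "0 \<le> r" "r \<le> 1"
    using bnd p by (simp_all add: r_def)
  have \<delta>: "\<delta> \<le> (1 - r^2) / (1 - p^2)"
    using Schwarz_Pick_deriv[OF hol bnd, of p] p by (simp add: r_def \<delta>_def)
  have "lam * p^2 * r \<le> lam * p^2"
    using r lam by (simp add: mult_left_le)
  then have den_pos: "0 < 1 - lam * p^2 * r"
    using lam by linarith
  have "norm (of_real (lam * p^2) * \<omega> p) = lam * p^2 * r"
    unfolding norm_mult norm_of_real r_def using lam by simp
  then have den: "1 - lam * p^2 * r \<le> norm (1 + of_real (lam * p^2) * \<omega> p)"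
    using norm_diff_ineq[of 1 "of_real (lam * p^2) * \<omega> p"] by simp
  have nz: "1 + of_real (lam * p^2) * \<omega> p \<noteq> 0"
    using den den_pos by auto
  have num: "norm (-1 + of_real (lam * p^3) * deriv \<omega> p / 2)
               \<le> 1 + lam * p^3 * ((1 - r^2) / (1 - p^2)) / 2"
  proof -
    have "norm (of_real (lam * p^3) * deriv \<omega> p / 2) = lam * p^3 * \<delta> / 2"
      unfolding norm_divide norm_mult norm_of_real \<delta>_def using lam p by simp
    then have "norm (-1 + of_real (lam * p^3) * deriv \<omega> p / 2) \<le> 1 + lam * p^3 * \<delta> / 2"
      using norm_triangle_ineq[of "-1" "of_real (lam * p^3) * deriv \<omega> p / 2"] by simp
    also have "\<dots> \<le> 1 + lam * p^3 * ((1 - r^2) / (1 - p^2)) / 2"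
      using \<delta> lam p by (intro add_left_mono divide_right_mono mult_left_mono) auto
    finally show ?thesis .
  qed
  have "norm (b0 lam p \<omega>) = p * norm (-1 + of_real (lam * p^3) * deriv \<omega> p / 2)
                               / norm (1 + of_real (lam * p^2) * \<omega> p)^2"
    using b0_eq[OF p hol nz] p by (simp add: norm_mult norm_divide norm_power)
  also have "\<dots> \<le> p * (1 + lam * p^3 * ((1 - r^2) / (1 - p^2)) / 2) / (1 - lam * p^2 * r)^2"
    using num den den_pos p lam p2 r
    by (intro frac_le mult_left_mono power_mono) (auto simp: abs_square_le_1)
  also have "\<dots> = b0_majorant lam p r"
    using p2 by (simp add: b0_majorant_def field_simps)
  finally show ?thesis by (simp add: r_def)
qed

lemma b0_majorant_le_majorant_1:
  assumes lam: "0 < lam" "lam * p^2 < 1" and p: "0 < p" "p < 1" and r: "0 \<le> r" "r \<le> 1"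
    and large: "2 * p^2 + p - 2 \<le> lam * p^3"
  shows "b0_majorant lam p r \<le> b0_majorant lam p 1"
proof -
  define u where "u = lam * p^2"
  define A where "A = 2 - 2 * p^2 + lam * p^3"
  have num: "2 - 2 * p^2 + lam * p^3 * (1 - s^2) = A - u * p * s^2" for s
    by (simp add: A_def u_def algebra_simps power2_eq_square power3_eq_cube)
  have u: "0 < u" "u < 1" and pA: "p \<le> A"
    using lam p large by (simp_all add: u_def A_def)
  have "u * r \<le> u"
    using u r by (simp add: mult_left_le)
  then have den: "0 < 1 - u * r" "0 < 1 - u" and "0 \<le> 2 - u - u * r"
    using u by linarith+
  then have "0 \<le> (A - p) * (2 - u - u * r) + p * ((1 - u) * (1 - r))"
    using pA u r p by (intro add_nonneg_nonneg mult_nonneg_nonneg) auto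
  also have "\<dots> = A * (2 - u - u * r) - p * (1 + r - 2 * u * r)"
    by (simp add: algebra_simps)
  finally have "0 \<le> u * (1 - r) * (A * (2 - u - u * r) - p * (1 + r - 2 * u * r))"
    using u r by simp
  also have "\<dots> = (A - u * p) * (1 - u * r)^2 - (A - u * p * r^2) * (1 - u)^2"
    by (simp add: algebra_simps power2_eq_square)
  finally have "(A - u * p * r^2) / (1 - u * r)^2 \<le> (A - u * p) / (1 - u)^2"
    using den by (simp add: divide_simps)
  moreover have "0 \<le> p / (2 * (1 - p^2))"
    using p by (simp add: abs_square_le_1 less_imp_le)
  ultimately show ?thesis
    unfolding b0_majorant_def num u_def[symmetric] by (intro mult_left_mono) simp_all
qed

lemma b0_majorant_le_critical:
  assumes lam: "0 \<le> lam" and p: "0 < p" "p < 1"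
    and crit: "lam * p * (lam * p^3 - 2 * p^2 + 2) < 1" and r: "lam * p^2 * r \<noteq> 1"
  shows "b0_majorant lam p r
           \<le> p / (2 * (1 - p^2)) * ((lam * p^3 - 2 * p^2 + 2) / (1 - lam * p * (lam * p^3 - 2 * p^2 + 2)))"
proof -
  define A where "A = lam * p^3 - 2 * p^2 + 2"
  have num: "2 - 2 * p^2 + lam * p^3 * (1 - r^2) = A - lam * p^3 * r^2"
    by (simp add: A_def algebra_simps)
  have "0 \<le> lam * p * (A - p * r)^2"
    using lam p by simp
  also have "\<dots> = A * (1 - lam * p^2 * r)^2 - (A - lam * p^3 * r^2) * (1 - lam * p * A)"
    by (simp add: algebra_simps power2_eq_square power3_eq_cube)
  finally have "(A - lam * p^3 * r^2) / (1 - lam * p^2 * r)^2 \<le> A / (1 - lam * p * A)"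
    using crit r unfolding A_def[symmetric] by (simp add: divide_simps)
  moreover have "0 \<le> p / (2 * (1 - p^2))"
    using p by (simp add: abs_square_le_1 less_imp_le)
  ultimately show ?thesis
    unfolding b0_majorant_def num A_def[symmetric] by (rule mult_left_mono)
qed

lemma b0_majorant_critical:
  assumes "p \<noteq> 0" "lam * p * (lam * p^3 - 2 * p^2 + 2) \<noteq> 1"
  shows "b0_majorant lam p ((lam * p^3 - 2 * p^2 + 2) / p)
           = p / (2 * (1 - p^2)) * ((lam * p^3 - 2 * p^2 + 2) / (1 - lam * p * (lam * p^3 - 2 * p^2 + 2)))"
proof -
  define A where "A = lam * p^3 - 2 * p^2 + 2"
  have "2 - 2 * p^2 + lam * p^3 * (1 - (A / p)^2) = A * (1 - lam * p * A)"
    and "1 - lam * p^2 * (A / p) = 1 - lam * p * A"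
    using assms(1) by (simp_all add: A_def field_simps power2_eq_square power3_eq_cube)
  then have "b0_majorant lam p (A / p) = p / (2 * (1 - p^2)) * (A * (1 - lam * p * A) / (1 - lam * p * A)^2)"
    by (simp only: b0_majorant_def)
  also have "\<dots> = p / (2 * (1 - p^2)) * (A / (1 - lam * p * A))"
    using assms(2) unfolding A_def[symmetric] by (simp add: power2_eq_square)
  finally show ?thesis
    unfolding A_def .
qed

lemma norm_b0_eq_majorant:
  fixes lam p r :: real
  assumes lam: "0 \<le> lam" "lam * p^2 < 1" and p: "0 < p" "p < 1" and r: "0 \<le> r" "r \<le> 1"
    and hol: "\<omega> holomorphic_on ball 0 1" and val: "\<omega> p = - of_real r"
    and der: "deriv \<omega> p = - of_real ((1 - r^2) / (1 - p^2))"
  shows "norm (b0 lam p \<omega>) = b0_majorant lam p r"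
proof -
  have "lam * p^2 * r \<le> lam * p^2"
    using lam r by (simp add: mult_left_le)
  then have den: "1 - lam * p^2 * r \<noteq> 0"
    using lam by linarith
  have "1 + of_real (lam * p^2) * \<omega> p = of_real (1 - lam * p^2 * r)"
    by (simp add: val)
  with den have "1 + of_real (lam * p^2) * \<omega> p \<noteq> 0"
    by (metis of_real_eq_0_iff)
  then have "b0 lam p \<omega> = of_real (p * (-1 - lam * p^3 * ((1 - r^2) / (1 - p^2)) / 2) / (1 - lam * p^2 * r)^2)"
    using b0_eq[OF p hol] by (simp add: val der)
  also have "-1 - lam * p^3 * ((1 - r^2) / (1 - p^2)) / 2
               = - (2 - 2 * p^2 + lam * p^3 * (1 - r^2)) / (2 * (1 - p^2))"
  proof -
    have "p^2 < 1"
      using p by (simp add: abs_square_less_1)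
    then show ?thesis
      by (simp add: field_simps)
  qed
  also have "p * (- (2 - 2 * p^2 + lam * p^3 * (1 - r^2)) / (2 * (1 - p^2))) / (1 - lam * p^2 * r)^2
               = - b0_majorant lam p r"
  proof -
    have "x * (- y / z) / w = - (x / z * (y / w))" for x y z w :: real
      by simp
    then show ?thesis
      by (simp only: b0_majorant_def)
  qed
  finally show ?thesis
    using b0_majorant_nonneg[of lam p r] lam p r by (simp add: abs_square_le_1)
qed

lemma real_Moebius_deriv_identity:
  fixes a p :: real
  assumes "1 + a * p \<noteq> 0" "p^2 \<noteq> 1"
  shows "(1 - a^2) / (1 + a * p)^2 = (1 - ((a + p) / (1 + a * p))^2) / (1 - p^2)"
proof -
  have "1 - ((a + p) / (1 + a * p))^2 = ((1 + a * p)^2 - (a + p)^2) / (1 + a * p)^2"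
    using assms(1) by (simp add: power_divide diff_divide_distrib)
  also have "(1 + a * p)^2 - (a + p)^2 = (1 - a^2) * (1 - p^2)"
    by (simp add: algebra_simps power2_eq_square)
  finally show ?thesis
    using assms(2) by simp
qed

lemma norm_b0_Moebius:
  fixes lam p a :: real
  assumes lam: "0 \<le> lam" "lam * p^2 < 1" and p: "0 < p" "p < 1" and a: "-p \<le> a" "a < 1"
  shows "norm (b0 lam p (\<lambda>z. - (of_real a + z) / (1 + of_real a * z)))
           = b0_majorant lam p ((a + p) / (1 + a * p))"
proof -
  define c where "c = (a + p) / (1 + a * p)"
  have "- p * p \<le> a * p"
    using mult_right_mono[OF a(1), of p] p by simp
  moreover have "p * p < 1"
    using mult_strict_mono[of p 1 p 1] p by simp
  ultimately have ap: "0 < 1 + a * p"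
    by linarith
  have "0 \<le> (1 - a) * (1 - p)"
    using a p by simp
  then have "a + p \<le> 1 + a * p"
    by (simp add: algebra_simps)
  then have c: "0 \<le> c" "c \<le> 1"
    using a ap by (simp_all add: c_def)
  have M: "(\<lambda>z. - (of_real a + z) / (1 + of_real a * z)) = (\<lambda>z. - Moebius_function 0 (- of_real a) z)"
    by (simp add: Moebius_function_simple minus_divide_left add.commute)
  have norm_a: "norm (- complex_of_real a) < 1"
    using a p by simp
  have "p^2 \<noteq> 1"
    using p by (simp add: abs_square_eq_1)
  then have deriv_eq: "(1 - a^2) / (1 + a * p)^2 = (1 - c^2) / (1 - p^2)"
    unfolding c_def using ap by (intro real_Moebius_deriv_identity) auto
  have "complex_of_real (1 + a * p) \<noteq> 0"
    unfolding of_real_eq_0_iff using ap by simp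
  then have "((\<lambda>z. - Moebius_function 0 (- of_real a) z) has_field_derivative
                - of_real ((1 - c^2) / (1 - p^2))) (at p)"
    unfolding deriv_eq[symmetric] using Moebius_function_has_field_derivative[of "- of_real a" p]
    by (auto intro!: derivative_eq_intros simp: power2_eq_square)
  then have "deriv (\<lambda>z. - Moebius_function 0 (- of_real a) z) p = - of_real ((1 - c^2) / (1 - p^2))"
    by (rule DERIV_imp_deriv)
  moreover have "(\<lambda>z. - Moebius_function 0 (- of_real a) z) holomorphic_on ball 0 1"
    using Moebius_function_holomorphic[OF norm_a] by (intro holomorphic_intros)
  moreover have "- Moebius_function 0 (- of_real a) p = - of_real c"
    by (simp add: Moebius_function_simple c_def add.commute)
  ultimately show ?thesis
    unfolding M c_def[symmetric] using norm_b0_eq_majorant lam p c by blast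
qed

lemma real_Moebius_preimage:
  fixes p c :: real
  assumes p: "0 < p" "p < 1" and c: "0 < c" "c < 1"
  obtains a where "-p < a" "a < 1" "(a + p) / (1 + a * p) = c"
proof
  define a where "a = (c - p) / (1 - c * p)"
  have "c * p < 1"
    using mult_strict_mono[of c 1 p 1] p c by simp
  then have cp: "0 < 1 - c * p"
    by simp
  have "0 < c * (1 - p^2)" and "0 < (1 - c) * (1 + p)"
    using p c by (simp_all add: abs_square_less_1)
  then have "-p * (1 - c * p) < c - p" and "c - p < 1 - c * p"
    by (simp_all add: algebra_simps power2_eq_square)
  then show "-p < a" "a < 1"
    using cp by (simp_all add: a_def divide_simps)
  have "a + p = c * (1 - p^2) / (1 - c * p)" "1 + a * p = (1 - p^2) / (1 - c * p)"
    using cp by (simp_all add: a_def field_simps power2_eq_square)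
  moreover have "p^2 < 1"
    using p by (simp add: abs_square_less_1)
  ultimately show "(a + p) / (1 + a * p) = c"
    using cp by simp
qed

lemma norm_b0_const_minus_1:
  fixes lam p :: real
  assumes "0 \<le> lam" "lam * p^2 < 1" "0 < p" "p < 1"
  shows "norm (b0 lam p (\<lambda>_. -1)) = p / (1 - lam * p^2)^2"
proof -
  have "norm (b0 lam p (\<lambda>_. -1)) = b0_majorant lam p 1"
    by (rule norm_b0_eq_majorant) (use assms in auto)
  also have "\<dots> = p / (1 - lam * p^2)^2"
    using assms by (intro b0_majorant_1) (simp add: abs_square_eq_1)
  finally show ?thesis .
qed

lemma quadratic_nonpos_below_sqrt17:
  fixes p :: real
  assumes "0 \<le> p" "p \<le> (sqrt 17 - 1) / 4"
  shows "2 * p^2 + p - 2 \<le> 0"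
proof -
  have "(4 * p + 1)^2 \<le> (sqrt 17)^2"
    using assms by (intro power_mono) auto
  then show ?thesis
    by (simp add: power2_eq_square algebra_simps)
qed

lemma norm_b0_le_large_lam:
  fixes lam p :: real
  assumes lam: "0 < lam" "lam * p^2 < 1" and p: "0 < p" "p < 1"
    and hol: "\<omega> holomorphic_on ball 0 1" and bnd: "\<forall>z\<in>ball 0 1. norm (\<omega> z) \<le> 1"
    and large: "2 * p^2 + p - 2 \<le> lam * p^3"
  shows "norm (b0 lam p \<omega>) \<le> p / (1 - lam * p^2)^2"
proof -
  have "norm (\<omega> p) \<le> 1"
    using bnd p by simp
  then have "b0_majorant lam p (norm (\<omega> p)) \<le> b0_majorant lam p 1"
    using b0_majorant_le_majorant_1 lam p large by simp
  also have "\<dots> = p / (1 - lam * p^2)^2"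
    using p by (intro b0_majorant_1) (simp add: abs_square_eq_1)
  finally show ?thesis
    using norm_b0_le_majorant[OF _ lam(2) p hol bnd] lam by simp
qed

lemma critical_product_lt_1:
  fixes lam p :: real
  assumes "0 < lam" "lam * p^2 < 1" "0 < p" "lam * p^3 < 2 * p^2 + p - 2"
  shows "lam * p * (lam * p^3 - 2 * p^2 + 2) < 1"
proof -
  have "lam * p * (lam * p^3 - 2 * p^2 + 2) < lam * p * p"
    using assms by (intro mult_strict_left_mono) auto
  also have "\<dots> = lam * p^2"
    by (simp add: power2_eq_square)
  finally show ?thesis
    using assms(2) by linarith
qed

lemma norm_b0_le_small_lam:
  fixes lam p :: real
  assumes lam: "0 < lam" "lam * p^2 < 1" and p: "0 < p" "p < 1"
    and hol: "\<omega> holomorphic_on ball 0 1" and bnd: "\<forall>z\<in>ball 0 1. norm (\<omega> z) \<le> 1"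
    and small: "lam * p^3 < 2 * p^2 + p - 2"
  shows "norm (b0 lam p \<omega>)
           \<le> p / (2 * (1 - p^2)) * ((lam * p^3 - 2 * p^2 + 2) / (1 - lam * p * (lam * p^3 - 2 * p^2 + 2)))"
proof -
  have crit: "lam * p * (lam * p^3 - 2 * p^2 + 2) < 1"
    using critical_product_lt_1[OF lam p(1) small] .
  have "lam * p^2 * norm (\<omega> p) \<le> lam * p^2"
    using bnd p lam by (simp add: mult_left_le)
  then have "lam * p^2 * norm (\<omega> p) \<noteq> 1"
    using lam by linarith
  then show ?thesis
    using norm_b0_le_majorant[OF _ lam(2) p hol bnd] b0_majorant_le_critical[OF _ p crit] lam
    by (meson less_imp_le order_trans)
qed

lemma norm_b0_Moebius_critical:
  fixes lam p :: real
  assumes lam: "0 < lam" "lam * p^2 < 1" and p: "0 < p" "p < 1"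
    and small: "lam * p^3 < 2 * p^2 + p - 2"
  shows "\<exists>a. -p < a \<and> a < 1 \<and> (a + p) / (1 + a * p) = (2 - 2 * p^2 + lam * p^3) / p \<and>
           norm (b0 lam p (\<lambda>z. - (of_real a + z) / (1 + of_real a * z)))
             = p / (2 * (1 - p^2)) * ((lam * p^3 - 2 * p^2 + 2) / (1 - lam * p * (lam * p^3 - 2 * p^2 + 2)))"
proof -
  define c where "c = (lam * p^3 - 2 * p^2 + 2) / p"
  have "0 < lam * p^3" "p^2 < 1"
    using lam p by (simp_all add: abs_square_less_1)
  then have "0 < c" "c < 1"
    using p small by (simp_all add: c_def divide_simps)
  then obtain a where a: "-p < a" "a < 1" "(a + p) / (1 + a * p) = c"
    using real_Moebius_preimage[OF p] by blast
  have "lam * p * (lam * p^3 - 2 * p^2 + 2) \<noteq> 1"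
    using critical_product_lt_1[OF lam p(1) small] by simp
  then have "norm (b0 lam p (\<lambda>z. - (of_real a + z) / (1 + of_real a * z)))
      = p / (2 * (1 - p^2)) * ((lam * p^3 - 2 * p^2 + 2) / (1 - lam * p * (lam * p^3 - 2 * p^2 + 2)))"
    using norm_b0_Moebius[of lam p a] b0_majorant_critical[of p lam] a lam p
    by (simp add: c_def)
  with a show ?thesis
    by (auto simp: c_def algebra_simps)
qed

theorem corollary3:
  fixes lam p :: real and \<omega> :: "complex \<Rightarrow> complex"
  assumes lam: "0 < lam" "lam < 1"
    and p: "0 < p" "p < 1"
    and hol: "\<omega> holomorphic_on ball 0 1"
    and bnd: "\<forall>z\<in>ball 0 1. norm (\<omega> z) \<le> 1"
  shows
    "(p \<le> (sqrt 17 - 1) / 4 \<longrightarrow>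
        norm (b0 lam p \<omega>) \<le> p / (1 - lam * p^2)^2 \<and>
        norm (b0 lam p (\<lambda>_. -1)) = p / (1 - lam * p^2)^2)
   \<and> ((sqrt 17 - 1) / 4 < p \<and> (2 * p^2 + p - 2) / p^3 \<le> lam \<longrightarrow>
        norm (b0 lam p \<omega>) \<le> p / (1 - lam * p^2)^2 \<and>
        norm (b0 lam p (\<lambda>_. -1)) = p / (1 - lam * p^2)^2)
   \<and> ((sqrt 17 - 1) / 4 < p \<and> lam < (2 * p^2 + p - 2) / p^3 \<longrightarrow>
        norm (b0 lam p \<omega>) \<le>
          p / (2 * (1 - p^2)) * ((lam * p^3 - 2 * p^2 + 2) / (1 - lam * p * (lam * p^3 - 2 * p^2 + 2)))
      \<and> (\<exists>a::real. -p < a \<and> a < 1 \<and>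
            (a + p) / (1 + a * p) = (2 - 2 * p^2 + lam * p^3) / p \<and>
            norm (b0 lam p (\<lambda>z. - (of_real a + z) / (1 + of_real a * z))) =
              p / (2 * (1 - p^2)) * ((lam * p^3 - 2 * p^2 + 2) / (1 - lam * p * (lam * p^3 - 2 * p^2 + 2)))))"
proof -
  have "p^2 < 1"
    using p by (simp add: abs_square_less_1)
  then have lp: "lam * p^2 < 1"
    using mult_strict_mono[of lam 1 "p^2" 1] lam by simp
  have "0 < p^3" "0 < lam * p^3"
    using lam p by simp_all
  then have small_p: "2 * p^2 + p - 2 \<le> lam * p^3" if "p \<le> (sqrt 17 - 1) / 4"
    using quadratic_nonpos_below_sqrt17[of p] that p by linarith
  from \<open>0 < p^3\<close> have "(2 * p^2 + p - 2) / p^3 \<le> lam \<longleftrightarrow> 2 * p^2 + p - 2 \<le> lam * p^3"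
    and "lam < (2 * p^2 + p - 2) / p^3 \<longleftrightarrow> lam * p^3 < 2 * p^2 + p - 2"
    by (simp_all add: pos_divide_le_eq pos_less_divide_eq)
  then show ?thesis
    using norm_b0_le_large_lam[OF lam(1) lp p hol bnd] norm_b0_le_small_lam[OF lam(1) lp p hol bnd]
      norm_b0_Moebius_critical[OF lam(1) lp p] norm_b0_const_minus_1[OF less_imp_le[OF lam(1)] lp p] small_p
    by blast
qed

end
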